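(* Let $m\in\mathrm{Ran}[m_N]\setminus\{-1,1\}$ and $\mu=\tanh^{-1}(-m)$. Let $I\subset\Lambda$ be an index set of fixed size and $f:\{-1,1\}^{|I|}\to\mathbb{R}$. Then \[ \left|\langle f\circ P_I\rangle_{\mathrm{MC}}^{m;N}-\langle f\circ P_I\rangle_{\mathrm{C}}^{\mu;N}\right|\le\sqrt{2|I|}\left(\max_{\phi}|f(\phi)|\right)\sqrt{\frac{\mathcal{H}(\mu_{\mathrm{MC}}^{m;N}\|\mu_{\mathrm{C}}^{\mu;N})}{N}}\le\sqrt{2|I|}\left(\max_{\phi}|f(\phi)|\right)\sqrt{\frac{\ln(N+1)}{N}}, \] so that $\langle f\circ P_I\rangle_{\mathrm{MC}}^{m;N}=\langle f\circ P_I\rangle_{\mathrm{C}}^{\mu;N}+O(\sqrt{\ln N}\,N^{-1/2})$. Moreover, there is a cutoff $N(m)\in\mathbb{N}$ such that for $N\ge N(m)$, $\frac{\ln(N+1)}{4N}\le\frac{\mathcal{H}(\mu_{\mathrm{MC}}^{m;N}\|\mu_{\mathrm{C}}^{\mu;N})}{N}$.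
   Context: $\Lambda$ is a finite lattice with $N=|\Lambda|$ sites, $\mathcal{S}=\{-1,1\}^\Lambda$, $M[\phi]=\sum_x\phi(x)$, $m_N=M/N$ with range $\mathrm{Ran}[m_N]$. $\mu_{\mathrm{MC}}^{m;N}$ is the uniform probability measure on $\{\phi:m_N[\phi]=m\}$; $\mu_{\mathrm{C}}^{\mu;N}$ is the probability measure on $\mathcal{S}$ with weights proportional to $e^{-\mu M[\phi]}$. $P_I$ is restriction to the sites of $I$; the maximum is over $\phi\in\{-1,1\}^{|I|}$. $\mathcal{H}$ is relative entropy. $X(N)=O(g(N))$ means $|X(N)|\le Cg(N)$ for all $N\ge N_0$, with $C$ independent of $N$ (possibly depending on the other parameters), as $N\to\infty$ along values with $m\in\mathrm{Ran}[m_N]$. *)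

theory Defs
  imports Complex_Main "HOL-Library.FuncSet"
begin

definition spins :: "'a set \<Rightarrow> ('a \<Rightarrow> real) set" where
  "spins Lam = Lam \<rightarrow>\<^sub>E {-1, 1}"

definition magn :: "'a set \<Rightarrow> ('a \<Rightarrow> real) \<Rightarrow> real" where
  "magn Lam \<phi> = (\<Sum>x\<in>Lam. \<phi> x)"

definition magN :: "'a set \<Rightarrow> ('a \<Rightarrow> real) \<Rightarrow> real" where
  "magN Lam \<phi> = magn Lam \<phi> / real (card Lam)"

definition RanM :: "'a set \<Rightarrow> real set" where
  "RanM Lam = magN Lam ` spins Lam"

definition mc_set :: "'a set \<Rightarrow> real \<Rightarrow> ('a \<Rightarrow> real) set" where
  "mc_set Lam m = {\<phi> \<in> spins Lam. magN Lam \<phi> = m}"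

definition mu_MC :: "'a set \<Rightarrow> real \<Rightarrow> ('a \<Rightarrow> real) \<Rightarrow> real" where
  "mu_MC Lam m \<phi> = (if \<phi> \<in> mc_set Lam m then 1 / real (card (mc_set Lam m)) else 0)"

definition Zc :: "'a set \<Rightarrow> real \<Rightarrow> real" where
  "Zc Lam \<mu> = (\<Sum>\<phi>\<in>spins Lam. exp (- \<mu> * magn Lam \<phi>))"

definition mu_C :: "'a set \<Rightarrow> real \<Rightarrow> ('a \<Rightarrow> real) \<Rightarrow> real" where
  "mu_C Lam \<mu> \<phi> = exp (- \<mu> * magn Lam \<phi>) / Zc Lam \<mu>"

definition expect :: "'a set \<Rightarrow> (('a \<Rightarrow> real) \<Rightarrow> real) \<Rightarrow> (('a \<Rightarrow> real) \<Rightarrow> real) \<Rightarrow> real" where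
  "expect Lam p g = (\<Sum>\<phi>\<in>spins Lam. p \<phi> * g \<phi>)"

definition rel_entropy :: "'a set \<Rightarrow> (('a \<Rightarrow> real) \<Rightarrow> real) \<Rightarrow> (('a \<Rightarrow> real) \<Rightarrow> real) \<Rightarrow> real" where
  "rel_entropy Lam p q = (\<Sum>\<phi>\<in>spins Lam. if p \<phi> = 0 then 0 else p \<phi> * ln (p \<phi> / q \<phi>))"

definition proj :: "'a set \<Rightarrow> ('a \<Rightarrow> real) \<Rightarrow> ('a \<Rightarrow> real)" where
  "proj I \<phi> = restrict \<phi> I"

definition maxabs :: "'a set \<Rightarrow> (('a \<Rightarrow> real) \<Rightarrow> real) \<Rightarrow> real" where
  "maxabs I f = Max ((\<lambda>\<psi>. \<bar>f \<psi>\<bar>) ` spins I)"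

end

theory Submission
  imports Defs
begin

text \<open>Both ensembles depend on a configuration only through its number of up spins. With
  \<open>p = k0 / N\<close> the fraction of up spins at magnetisation \<open>m\<close>, the microcanonical ensemble is uniform on
  the configurations with \<open>k0\<close> up spins, and the canonical one at \<open>\<mu> = artanh (-m)\<close> makes the spins
  independent and up with probability \<open>p\<close>; their marginals on \<open>I\<close> are hypergeometric and binomial.
  By Pinsker's inequality the difference of expectations is at most \<open>max \<bar>f\<bar> sqrt (2 H\<^sub>I)\<close>, where
  \<open>H\<^sub>I\<close> is the relative entropy of the marginals. By the chain rule the relative entropy of the
  marginals on \<open>t\<close> sites has increments that increase with \<open>t\<close> (convexity of the binary relative
  entropy), hence \<open>H\<^sub>I \<le> (card I / N) H\<close>. Finally \<open>H = - ln P(Bin(N, p) = k0)\<close>: this is at most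
  \<open>ln (N + 1)\<close> since \<open>k0\<close> is the mode, and at least \<open>ln (N + 1) / 4\<close> for large \<open>N\<close> since the binomial
  probabilities stay above half their maximum on a window of width about \<open>sqrt (N p (1 - p))\<close>.\<close>

section \<open>Relative entropy of finite weights\<close>

definition kl_term :: "real \<Rightarrow> real \<Rightarrow> real" where
  "kl_term u v = (if u = 0 then 0 else u * ln (u / v))"

lemma rel_entropy_eq_sum_kl_term:
  "rel_entropy Lam p q = (\<Sum>\<phi>\<in>spins Lam. kl_term (p \<phi>) (q \<phi>))"
  by (simp add: rel_entropy_def kl_term_def)

lemma kl_term_scale: "c > 0 \<Longrightarrow> kl_term (c * u) (c * v) = c * kl_term u v"
  by (simp add: kl_term_def)

lemma kl_term_antimono_right: "u \<ge> 0 \<Longrightarrow> 0 < v \<Longrightarrow> v \<le> w \<Longrightarrow> kl_term u w \<le> kl_term u v"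
  unfolding kl_term_def by (auto intro!: mult_left_mono simp: divide_left_mono)

lemma kl_term_add_le:
  assumes u1: "u1 \<ge> 0" and u2: "u2 \<ge> 0" and v1: "v1 > 0" and v2: "v2 > 0"
  shows "kl_term (u1 + u2) (v1 + v2) \<le> kl_term u1 v1 + kl_term u2 v2"
proof (cases "u1 = 0 \<or> u2 = 0")
  case True
  then show ?thesis
    using kl_term_antimono_right[of u2 v2 "v1 + v2"] kl_term_antimono_right[of u1 v1 "v1 + v2"] assms
    by (auto simp: kl_term_def)
next
  case False
  define U where "U = u1 + u2"
  define V where "V = v1 + v2"
  have "u1 > 0" "u2 > 0" "U > 0" "V > 0" using False u1 u2 v1 v2 by (auto simp: U_def V_def)
  have split_ln: "u * ln (u / v) = u * ln (U / V) - u * ln (v * U / (u * V))" if "u > 0" "v > 0" for u v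
    using that \<open>U > 0\<close> \<open>V > 0\<close> by (simp add: ln_div ln_mult algebra_simps)
  \<comment> \<open>\<open>ln y \<le> y - 1\<close> applied to \<open>y = v U / (u V)\<close>, whose weighted sum of \<open>y - 1\<close> vanishes\<close>
  have remainder: "- u * ln (v * U / (u * V)) \<ge> u - v * U / V" if "u > 0" "v > 0" for u v
    using ln_le_minus_one[of "v * U / (u * V)"] that \<open>U > 0\<close> \<open>V > 0\<close>
    by (simp add: field_simps mult_left_mono)
  have "v1 * U / V + v2 * U / V = U"
    using \<open>V > 0\<close> by (simp add: V_def add_divide_distrib[symmetric] distrib_right[symmetric])
  then have "kl_term u1 v1 + kl_term u2 v2 \<ge> U * ln (U / V)"
    using split_ln[of u1 v1] split_ln[of u2 v2] remainder[of u1 v1] remainder[of u2 v2]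
      \<open>u1 > 0\<close> \<open>u2 > 0\<close> v1 v2
    by (simp add: kl_term_def U_def algebra_simps)
  then show ?thesis using \<open>U > 0\<close> by (simp add: kl_term_def U_def V_def)
qed

lemma kl_term_sum_le:
  assumes "finite S" "S \<noteq> {}" "\<And>i. i \<in> S \<Longrightarrow> u i \<ge> 0" "\<And>i. i \<in> S \<Longrightarrow> v i > 0"
  shows "kl_term (sum u S) (sum v S) \<le> (\<Sum>i\<in>S. kl_term (u i) (v i))"
  using assms
proof (induction S rule: finite_ne_induct)
  case (insert x F)
  have "kl_term (sum u (insert x F)) (sum v (insert x F)) \<le> kl_term (u x) (v x) + kl_term (sum u F) (sum v F)"
    using insert by (auto intro!: kl_term_add_le sum_nonneg sum_pos)
  also have "\<dots> \<le> kl_term (u x) (v x) + (\<Sum>i\<in>F. kl_term (u i) (v i))"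
    using insert by auto
  finally show ?case using insert by simp
qed simp

lemma sum_kl_term_nonneg:
  assumes "finite S" "\<And>i. i \<in> S \<Longrightarrow> u i \<ge> 0" "\<And>i. i \<in> S \<Longrightarrow> v i > 0"
    and "sum u S = 1" "sum v S = 1"
  shows "0 \<le> (\<Sum>i\<in>S. kl_term (u i) (v i))"
proof -
  have "S \<noteq> {}" using \<open>sum u S = 1\<close> by auto
  then show ?thesis using kl_term_sum_le[of S u v] assms by (simp add: kl_term_def)
qed

lemma four_mult_one_minus_le_1: "4 * x * (1 - x) \<le> (1::real)"
  using zero_le_power2[of "2*x-1"] by (simp add: power2_eq_square algebra_simps)

lemma two_sq_le_neg_ln_one_minus:
  assumes "0 \<le> b" "b < (1::real)"
  shows "2 * b^2 \<le> - ln (1 - b)"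
proof -
  define f where "f y = - ln (1 - y) - 2 * y^2" for y :: real
  have "f 0 \<le> f b"
  proof (rule DERIV_nonneg_imp_nondecreasing[OF assms(1)])
    fix x assume "0 \<le> x" "x \<le> b"
    with assms have "x < 1" by linarith
    have "(f has_real_derivative (1 / (1 - x) - 4 * x)) (at x)"
      unfolding f_def by (rule derivative_eq_intros refl | use \<open>x < 1\<close> in simp)+
    moreover have "1 / (1 - x) - 4 * x \<ge> 0"
      using four_mult_one_minus_le_1[of x] \<open>x < 1\<close> by (simp add: field_simps)
    ultimately show "\<exists>y. (f has_real_derivative y) (at x) \<and> 0 \<le> y" by blast
  qed
  then show ?thesis by (simp add: f_def)
qed

lemma pinsker_binary_interior:
  assumes a: "0 < a" "a < (1::real)" and b: "0 < b" "b < 1"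
  shows "2 * (a - b)^2 \<le> a * (ln a - ln b) + (1 - a) * (ln (1 - a) - ln (1 - b))"
proof -
  define G where
    "G y = a * (ln a - ln y) + (1 - a) * (ln (1 - a) - ln (1 - y)) - 2 * (a - y)^2" for y :: real
  have G': "(G has_real_derivative ((y - a) * (1 / (y * (1 - y)) - 4))) (at y)"
    if "0 < y" "y < 1" for y :: real
  proof -
    have "(G has_real_derivative (a * (- (1 / y)) + (1 - a) * (- (- 1 / (1 - y))) - 2 * (2 * (a - y) * (- 1)))) (at y)"
      unfolding G_def by (rule derivative_eq_intros refl | use that in simp)+
    then show ?thesis using that by (simp add: field_simps)
  qed
  have factor_nonneg: "1 / (y * (1 - y)) - 4 \<ge> 0" if "0 < y" "y < 1" for y :: real
    using four_mult_one_minus_le_1[of y] that by (simp add: field_simps)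
  \<comment> \<open>\<open>G\<close> vanishes at \<open>a\<close> and its derivative has the sign of \<open>y - a\<close>\<close>
  have "G a \<le> G b"
  proof (cases "a \<le> b")
    case True
    show ?thesis
    proof (rule DERIV_nonneg_imp_nondecreasing[OF True])
      fix x assume x: "a \<le> x" "x \<le> b"
      then have "0 < x" "x < 1" using a b by linarith+
      then show "\<exists>y. (G has_real_derivative y) (at x) \<and> 0 \<le> y"
        using G' factor_nonneg x by (intro exI conjI) auto
    qed
  next
    case False
    show ?thesis
    proof (rule DERIV_nonpos_imp_nonincreasing[of b a G])
      show "b \<le> a" using False by simp
    next
      fix x assume x: "b \<le> x" "x \<le> a"
      then have "0 < x" "x < 1" using a b by linarith+
      then show "\<exists>y. (G has_real_derivative y) (at x) \<and> y \<le> 0"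
        using G' factor_nonneg x by (intro exI conjI) (auto simp: mult_nonpos_nonneg)
    qed
  qed
  then show ?thesis by (simp add: G_def)
qed

definition binary_kl :: "real \<Rightarrow> real \<Rightarrow> real" where
  "binary_kl x p = kl_term x p + kl_term (1 - x) (1 - p)"

lemma pinsker_binary:
  assumes "0 \<le> a" "a \<le> (1::real)" and b: "0 < b" "b < 1"
  shows "2 * (a - b)^2 \<le> binary_kl a b"
proof -
  consider "a = 0" | "a = 1" | "0 < a \<and> a < 1" using assms by linarith
  then show ?thesis
  proof cases
    case 1
    then show ?thesis using two_sq_le_neg_ln_one_minus[of b] b by (simp add: binary_kl_def kl_term_def ln_div)
  next
    case 2
    then show ?thesis using two_sq_le_neg_ln_one_minus[of "1 - b"] b
      by (simp add: binary_kl_def kl_term_def ln_div power2_commute)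
  next
    case 3
    then show ?thesis using pinsker_binary_interior[of a b] b by (simp add: binary_kl_def kl_term_def ln_div)
  qed
qed

lemma sum_abs_diff_eq_twice_positive_part:
  fixes u v :: "'a \<Rightarrow> real"
  assumes "finite S" "sum u S = sum v S"
  shows "(\<Sum>i\<in>S. \<bar>u i - v i\<bar>) = 2 * (\<Sum>i\<in>{i\<in>S. v i \<le> u i}. u i - v i)"
proof -
  define A where "A = {i\<in>S. v i \<le> u i}"
  have "finite A" "A \<subseteq> S" using assms(1) by (auto simp: A_def)
  have "(\<Sum>i\<in>A. \<bar>u i - v i\<bar>) = (\<Sum>i\<in>A. u i - v i)"
    and "(\<Sum>i\<in>S - A. \<bar>u i - v i\<bar>) = (\<Sum>i\<in>S - A. v i - u i)"
    by (intro sum.cong refl; auto simp: A_def abs_if)+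
  then have "(\<Sum>i\<in>S. \<bar>u i - v i\<bar>) = (\<Sum>i\<in>A. u i - v i) + (\<Sum>i\<in>S - A. v i - u i)"
    using sum.subset_diff[OF \<open>A \<subseteq> S\<close> assms(1), of "\<lambda>i. \<bar>u i - v i\<bar>"] by simp
  moreover have "(\<Sum>i\<in>S - A. v i - u i) = (\<Sum>i\<in>A. u i - v i)"
    using sum.subset_diff[OF \<open>A \<subseteq> S\<close> assms(1), of "\<lambda>i. v i - u i"] assms(2)
    by (simp add: sum_subtractf)
  ultimately show ?thesis by (simp add: A_def)
qed

lemma pinsker:
  assumes S: "finite S" and u: "\<And>i. i \<in> S \<Longrightarrow> u i \<ge> 0" and v: "\<And>i. i \<in> S \<Longrightarrow> v i > 0"
    and su: "sum u S = 1" and sv: "sum v S = 1"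
  shows "(\<Sum>i\<in>S. \<bar>u i - v i\<bar>)^2 \<le> 2 * (\<Sum>i\<in>S. kl_term (u i) (v i))"
proof -
  \<comment> \<open>coarse-grain to the two blocks \<open>{u \<ge> v}\<close> and \<open>{u < v}\<close>, which keeps the \<open>\<ell>\<^sub>1\<close> distance\<close>
  define A where "A = {i\<in>S. v i \<le> u i}"
  define B where "B = S - A"
  define a b where "a = sum u A" and "b = sum v A"
  have "A \<subseteq> S" "finite A" "finite B" using S by (auto simp: A_def B_def)
  have "sum u B = 1 - a" "sum v B = 1 - b"
    using su sv sum.subset_diff[OF \<open>A \<subseteq> S\<close> S, of u] sum.subset_diff[OF \<open>A \<subseteq> S\<close> S, of v]
    by (simp_all add: a_def b_def B_def)
  have l1: "(\<Sum>i\<in>S. \<bar>u i - v i\<bar>) = 2 * (a - b)"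
    using sum_abs_diff_eq_twice_positive_part[OF S] su sv by (simp add: A_def a_def b_def sum_subtractf)
  have kl_split: "(\<Sum>i\<in>S. kl_term (u i) (v i)) = (\<Sum>i\<in>A. kl_term (u i) (v i)) + (\<Sum>i\<in>B. kl_term (u i) (v i))"
    using sum.subset_diff[OF \<open>A \<subseteq> S\<close> S] by (simp add: B_def add.commute)
  show ?thesis
  proof (cases "A = {} \<or> B = {}")
    case True
    then have "a = b" using \<open>sum u B = 1 - a\<close> \<open>sum v B = 1 - b\<close> by (auto simp: a_def b_def)
    then show ?thesis using l1 sum_kl_term_nonneg[OF S u v su sv] by simp
  next
    case False
    have "b > 0" "a \<ge> 0"
      unfolding a_def b_def using False \<open>finite A\<close> \<open>A \<subseteq> S\<close> u v by (auto intro!: sum_pos sum_nonneg)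
    moreover have "1 - b > 0" "1 - a \<ge> 0"
      unfolding \<open>sum u B = 1 - a\<close>[symmetric] \<open>sum v B = 1 - b\<close>[symmetric] using False \<open>finite B\<close> u v
      by (auto simp: B_def intro!: sum_pos sum_nonneg)
    ultimately have "2 * (a - b)^2 \<le> kl_term a b + kl_term (1 - a) (1 - b)"
      using pinsker_binary[of a b] by (simp add: binary_kl_def)
    also have "\<dots> \<le> (\<Sum>i\<in>A. kl_term (u i) (v i)) + (\<Sum>i\<in>B. kl_term (u i) (v i))"
    proof (rule add_mono)
      show "kl_term a b \<le> (\<Sum>i\<in>A. kl_term (u i) (v i))"
        unfolding a_def b_def using False \<open>finite A\<close> \<open>A \<subseteq> S\<close> u v by (intro kl_term_sum_le) auto
      show "kl_term (1 - a) (1 - b) \<le> (\<Sum>i\<in>B. kl_term (u i) (v i))"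
        unfolding \<open>sum u B = 1 - a\<close>[symmetric] \<open>sum v B = 1 - b\<close>[symmetric]
        using False \<open>finite B\<close> u v by (intro kl_term_sum_le) (auto simp: B_def)
    qed
    finally show ?thesis unfolding l1 kl_split power_mult_distrib by simp
  qed
qed

lemma kl_term_convex:
  assumes "0 \<le> l" "l \<le> 1" and "0 \<le> x" "0 \<le> y" "0 < p"
  shows "kl_term (l * x + (1 - l) * y) p \<le> l * kl_term x p + (1 - l) * kl_term y p"
proof -
  consider "l = 0" | "l = 1" | "0 < l \<and> l < 1" using assms by linarith
  then show ?thesis
  proof cases
    case 3
    have "kl_term (l * x + (1 - l) * y) p = kl_term (l * x + (1 - l) * y) (l * p + (1 - l) * p)"
      by (simp add: algebra_simps)
    also have "\<dots> \<le> kl_term (l * x) (l * p) + kl_term ((1 - l) * y) ((1 - l) * p)"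
      using 3 assms by (intro kl_term_add_le) auto
    also have "\<dots> = l * kl_term x p + (1 - l) * kl_term y p"
      using 3 by (simp add: kl_term_scale)
    finally show ?thesis .
  qed auto
qed

lemma binary_kl_convex:
  assumes l: "0 \<le> l" "l \<le> 1"
    and x: "0 < l \<Longrightarrow> 0 \<le> x \<and> x \<le> 1" and y: "l < 1 \<Longrightarrow> 0 \<le> y \<and> y \<le> 1"
    and p: "0 < p" "p < 1"
  shows "binary_kl (l * x + (1 - l) * y) p \<le> l * binary_kl x p + (1 - l) * binary_kl y p"
proof -
  consider "l = 0" | "l = 1" | "0 < l \<and> l < 1" using l by linarith
  then show ?thesis
  proof cases
    case 3
    have "0 \<le> x" "x \<le> 1" "0 \<le> y" "y \<le> 1" using x y 3 by auto
    have "1 - (l * x + (1 - l) * y) = l * (1 - x) + (1 - l) * (1 - y)" by (simp add: algebra_simps)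
    then show ?thesis
      using kl_term_convex[of l x y p] kl_term_convex[of l "1 - x" "1 - y" "1 - p"]
        l p \<open>0 \<le> x\<close> \<open>x \<le> 1\<close> \<open>0 \<le> y\<close> \<open>y \<le> 1\<close>
      unfolding binary_kl_def by (simp add: algebra_simps)
  qed auto
qed

lemma kl_term_mult:
  assumes "h > 0" "g > 0" "q > 0" "r \<ge> 0"
  shows "kl_term (h * r) (g * q) = r * h * ln (h / g) + h * kl_term r q"
proof (cases "r = 0")
  case False
  then have "ln (h * r / (g * q)) = ln (h / g) + ln (r / q)"
    using assms by (simp add: ln_mult ln_div)
  then show ?thesis using assms False by (simp add: kl_term_def algebra_simps)
qed (simp add: kl_term_def)

lemma kl_term_chain_rule:
  assumes "h \<ge> 0" "g > 0" "0 < p" "p < 1" and r: "h > 0 \<Longrightarrow> 0 \<le> r \<and> r \<le> 1"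
  shows "kl_term (h * r) (g * p) + kl_term (h * (1 - r)) (g * (1 - p)) = kl_term h g + h * binary_kl r p"
proof (cases "h = 0")
  case False
  then have "h > 0" "0 \<le> r" "r \<le> 1" using assms by auto
  then show ?thesis
    using kl_term_mult[of h g p r] kl_term_mult[of h g "1 - p" "1 - r"] assms
    by (simp add: kl_term_def[of h] binary_kl_def algebra_simps)
qed (simp add: kl_term_def)

section \<open>Counting spin configurations\<close>

definition n_up :: "'a set \<Rightarrow> ('a \<Rightarrow> real) \<Rightarrow> nat" where
  "n_up S \<phi> = card {x\<in>S. \<phi> x = 1}"

definition config_of_set :: "'a set \<Rightarrow> 'a set \<Rightarrow> ('a \<Rightarrow> real)" where
  "config_of_set S B = (\<lambda>x\<in>S. if x \<in> B then 1 else -1)"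

lemma spins_values: "\<phi> \<in> spins S \<Longrightarrow> x \<in> S \<Longrightarrow> \<phi> x = 1 \<or> \<phi> x = -1"
  by (auto simp: spins_def PiE_def)

lemma spins_outside: "\<phi> \<in> spins S \<Longrightarrow> x \<notin> S \<Longrightarrow> \<phi> x = undefined"
  by (auto simp: spins_def PiE_def extensional_def)

lemma config_of_set_in_spins: "config_of_set S B \<in> spins S"
  by (auto simp: config_of_set_def spins_def)

lemma finite_spins: "finite S \<Longrightarrow> finite (spins S)"
  by (simp add: spins_def finite_PiE)

lemma n_up_le_card: "finite S \<Longrightarrow> n_up S \<phi> \<le> card S"
  unfolding n_up_def by (rule card_mono) auto

lemma bij_betw_spins_Pow: "bij_betw (\<lambda>\<phi>. {x\<in>S. \<phi> x = 1}) (spins S) (Pow S)"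
proof (rule bij_betw_byWitness[where f' = "config_of_set S"])
  show "\<forall>\<phi>\<in>spins S. config_of_set S {x \<in> S. \<phi> x = 1} = \<phi>"
    using spins_values spins_outside by (fastforce simp: config_of_set_def)
  show "config_of_set S ` Pow S \<subseteq> spins S" using config_of_set_in_spins by auto
qed (auto simp: config_of_set_def)

lemma sum_spins_n_up:
  fixes F :: "nat \<Rightarrow> real"
  assumes "finite S"
  shows "(\<Sum>\<phi>\<in>spins S. F (n_up S \<phi>)) = (\<Sum>k\<le>card S. real (card S choose k) * F k)"
proof -
  have "(\<Sum>\<phi>\<in>spins S. F (n_up S \<phi>)) = (\<Sum>B\<in>Pow S. F (card B))"
    unfolding n_up_def by (rule sum.reindex_bij_betw[OF bij_betw_spins_Pow])
  also have "\<dots> = (\<Sum>k\<le>card S. \<Sum>B\<in>{B. B \<in> Pow S \<and> card B = k}. F (card B))"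
    using assms by (intro sum.group[symmetric]) (auto intro: card_mono)
  also have "\<dots> = (\<Sum>k\<le>card S. real (card S choose k) * F k)"
    using n_subsets[OF assms] by (simp add: Pow_def)
  finally show ?thesis .
qed

lemma magn_eq_n_up:
  assumes "finite Lam" "\<phi> \<in> spins Lam"
  shows "magn Lam \<phi> = 2 * real (n_up Lam \<phi>) - real (card Lam)"
proof -
  have "magn Lam \<phi> = (\<Sum>x\<in>Lam. 2 * (if \<phi> x = 1 then 1 else 0) - 1)"
    unfolding magn_def using spins_values[OF assms(2)] by (intro sum.cong refl) force
  also have "\<dots> = 2 * (\<Sum>x\<in>Lam. if \<phi> x = 1 then 1 else 0) - real (card Lam)"
    by (simp add: sum_subtractf sum_distrib_left)
  finally show ?thesis
    using assms(1) by (simp add: n_up_def sum.inter_filter[symmetric])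
qed

lemma proj_in_spins: "I \<subseteq> S \<Longrightarrow> \<phi> \<in> spins S \<Longrightarrow> proj I \<phi> \<in> spins I"
  by (auto simp: proj_def spins_def)

definition glue :: "'a set \<Rightarrow> ('a \<Rightarrow> real) \<Rightarrow> ('a \<Rightarrow> real) \<Rightarrow> ('a \<Rightarrow> real)" where
  "glue I \<psi> \<chi> = (\<lambda>x. if x \<in> I then \<psi> x else \<chi> x)"

lemma n_up_glue:
  assumes "finite S" "I \<subseteq> S"
  shows "n_up S (glue I \<psi> \<chi>) = n_up I \<psi> + n_up (S - I) \<chi>"
proof -
  have "{x\<in>S. glue I \<psi> \<chi> x = 1} = {x\<in>I. \<psi> x = 1} \<union> {x\<in>S - I. \<chi> x = 1}"
    using assms(2) by (auto simp: glue_def)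
  then show ?thesis
    unfolding n_up_def using assms finite_subset[OF assms(2,1)] by (subst card_Un_disjoint[symmetric]) auto
qed

lemma sum_extensions_n_up:
  fixes F :: "nat \<Rightarrow> real"
  assumes fin: "finite S" and IS: "I \<subseteq> S" and psi: "\<psi> \<in> spins I"
  shows "(\<Sum>\<phi>\<in>{\<phi>\<in>spins S. proj I \<phi> = \<psi>}. F (n_up S \<phi>))
       = (\<Sum>k\<le>card S - card I. real (card S - card I choose k) * F (n_up I \<psi> + k))"
proof -
  have "(\<Sum>\<phi>\<in>{\<phi>\<in>spins S. proj I \<phi> = \<psi>}. F (n_up S \<phi>))
      = (\<Sum>\<chi>\<in>spins (S - I). F (n_up I \<psi> + n_up (S - I) \<chi>))"
  proof (rule sum.reindex_bij_witness[where j = "\<lambda>\<phi>. restrict \<phi> (S - I)" and i = "glue I \<psi>"])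
    fix \<phi> assume "\<phi> \<in> {\<phi>\<in>spins S. proj I \<phi> = \<psi>}"
    then have "\<phi> \<in> spins S" "restrict \<phi> I = \<psi>" by (auto simp: proj_def)
    then show glued: "glue I \<psi> (restrict \<phi> (S - I)) = \<phi>"
      using spins_outside[of \<phi> S] IS by (auto simp: glue_def)
    show "restrict \<phi> (S - I) \<in> spins (S - I)" using \<open>\<phi> \<in> spins S\<close> by (auto simp: spins_def)
    show "F (n_up I \<psi> + n_up (S - I) (restrict \<phi> (S - I))) = F (n_up S \<phi>)"
      using n_up_glue[OF fin IS] glued by metis
  next
    fix \<chi> assume "\<chi> \<in> spins (S - I)"
    then show "restrict (glue I \<psi> \<chi>) (S - I) = \<chi>"
      using spins_outside[of \<chi> "S - I"] by (auto simp: glue_def)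
    have "glue I \<psi> \<chi> \<in> spins S"
      using psi \<open>\<chi> \<in> spins (S - I)\<close> IS unfolding spins_def glue_def by (auto simp: PiE_def extensional_def Pi_def)
    moreover have "proj I (glue I \<psi> \<chi>) = \<psi>"
      using spins_outside[OF psi] by (auto simp: glue_def proj_def)
    ultimately show "glue I \<psi> \<chi> \<in> {\<phi>\<in>spins S. proj I \<phi> = \<psi>}" by simp
  qed
  also have "\<dots> = (\<Sum>k\<le>card (S - I). real (card (S - I) choose k) * F (n_up I \<psi> + k))"
    using fin by (intro sum_spins_n_up) auto
  finally show ?thesis using fin IS by (simp add: card_Diff_subset finite_subset)
qed

lemma expect_proj_n_up:
  fixes F :: "nat \<Rightarrow> real"
  assumes fin: "finite S" and IS: "I \<subseteq> S" and X: "\<And>\<phi>. \<phi> \<in> spins S \<Longrightarrow> X \<phi> = F (n_up S \<phi>)"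
  shows "expect S X (g \<circ> proj I)
       = (\<Sum>\<psi>\<in>spins I. g \<psi> * (\<Sum>k\<le>card S - card I. real (card S - card I choose k) * F (n_up I \<psi> + k)))"
proof -
  have "expect S X (g \<circ> proj I) = (\<Sum>\<phi>\<in>spins S. F (n_up S \<phi>) * g (proj I \<phi>))"
    unfolding expect_def using X by (intro sum.cong) auto
  also have "\<dots> = (\<Sum>\<psi>\<in>spins I. \<Sum>\<phi>\<in>{\<phi>. \<phi> \<in> spins S \<and> proj I \<phi> = \<psi>}. F (n_up S \<phi>) * g (proj I \<phi>))"
    using fin finite_subset[OF IS fin] proj_in_spins[OF IS]
    by (intro sum.group[symmetric]) (auto simp: finite_spins)
  also have "\<dots> = (\<Sum>\<psi>\<in>spins I. g \<psi> * (\<Sum>\<phi>\<in>{\<phi>\<in>spins S. proj I \<phi> = \<psi>}. F (n_up S \<phi>)))"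
    by (intro sum.cong refl) (auto simp: sum_distrib_left algebra_simps intro!: sum.cong)
  also have "\<dots> = (\<Sum>\<psi>\<in>spins I. g \<psi> * (\<Sum>k\<le>card S - card I. real (card S - card I choose k) * F (n_up I \<psi> + k)))"
    using sum_extensions_n_up[OF fin IS] by (intro sum.cong refl) auto
  finally show ?thesis .
qed

lemma maxabs_ge: "finite I \<Longrightarrow> \<psi> \<in> spins I \<Longrightarrow> \<bar>f \<psi>\<bar> \<le> maxabs I f"
  unfolding maxabs_def by (rule Max_ge) (auto simp: finite_spins)

lemma maxabs_nonneg: "finite I \<Longrightarrow> 0 \<le> maxabs I f"
  using maxabs_ge[of I "config_of_set I {}" f] config_of_set_in_spins[of I "{}"] by linarith

lemma abs_sum_spins_diff_le:
  fixes u v :: "nat \<Rightarrow> real"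
  assumes "finite I"
  shows "\<bar>\<Sum>\<psi>\<in>spins I. f \<psi> * (u (n_up I \<psi>) - v (n_up I \<psi>))\<bar>
    \<le> maxabs I f * (\<Sum>j\<le>card I. real (card I choose j) * \<bar>u j - v j\<bar>)"
proof -
  have "\<bar>\<Sum>\<psi>\<in>spins I. f \<psi> * (u (n_up I \<psi>) - v (n_up I \<psi>))\<bar>
      \<le> (\<Sum>\<psi>\<in>spins I. maxabs I f * \<bar>u (n_up I \<psi>) - v (n_up I \<psi>)\<bar>)"
    using maxabs_ge[OF assms] by (intro order.trans[OF sum_abs] sum_mono) (auto simp: abs_mult mult_right_mono)
  also have "\<dots> = maxabs I f * (\<Sum>j\<le>card I. real (card I choose j) * \<bar>u j - v j\<bar>)"
    using sum_spins_n_up[OF assms, of "\<lambda>j. \<bar>u j - v j\<bar>"] by (simp add: sum_distrib_left[symmetric])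
  finally show ?thesis .
qed

section \<open>Hypergeometric versus binomial marginals\<close>

lemma binomial_Suc_Suc_eq_ratio:
  "real (r choose i) = real (Suc r choose Suc i) * (real (Suc i) / real (Suc r))"
  using arg_cong[OF Suc_times_binomial_eq[of r i], of real] by (simp add: field_simps)

lemma binomial_Suc_eq_ratio:
  "real (r choose i) = real (Suc r choose i) * ((real (Suc r) - real i) / real (Suc r))"
proof (cases "i \<le> Suc r")
  case True
  then show ?thesis
    using arg_cong[OF binomial_absorb_comp[of "Suc r" i], of real] by (simp add: of_nat_diff field_simps)
qed (simp add: binomial_eq_0)

lemma sum_choose_Suc:
  fixes F :: "nat \<Rightarrow> real"
  shows "(\<Sum>j\<le>Suc t. real (Suc t choose j) * F j) = (\<Sum>j\<le>t. real (t choose j) * (F j + F (Suc j)))"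
proof -
  have shift: "(\<Sum>j\<le>Suc t. real (Suc t choose j) * F j)
      = F 0 + (\<Sum>j\<le>t. real (t choose j) * F (Suc j)) + (\<Sum>j\<le>t. real (t choose Suc j) * F (Suc j))"
    by (subst sum.atMost_Suc_shift) (simp add: sum.distrib algebra_simps)
  have "F 0 + (\<Sum>j\<le>t. real (t choose Suc j) * F (Suc j)) = (\<Sum>j\<le>t. real (t choose j) * F j)"
    using sum.atMost_Suc_shift[of "\<lambda>j. real (t choose j) * F j" t] by (simp add: binomial_eq_0)
  with shift show ?thesis by (simp add: sum.distrib algebra_simps)
qed

lemma sum_prefix_le_proportional:
  fixes d :: "nat \<Rightarrow> real"
  assumes mono: "\<And>s s'. s \<le> s' \<Longrightarrow> s' < N \<Longrightarrow> d s \<le> d s'" and "n \<le> N"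
  shows "real N * (\<Sum>s<n. d s) \<le> real n * (\<Sum>s<N. d s)"
proof (cases "n = N")
  case False
  then have "n < N" using \<open>n \<le> N\<close> by simp
  define A B where "A = (\<Sum>s<n. d s)" and "B = (\<Sum>s\<in>{n..<N}. d s)"
  have "(\<Sum>s<N. d s) = A + B"
    unfolding A_def B_def using \<open>n < N\<close> by (simp add: sum.atLeastLessThan_concat[symmetric] lessThan_atLeast0)
  moreover have "A \<le> real n * d n"
    using sum_mono[of "{..<n}" d "\<lambda>_. d n"] mono \<open>n < N\<close> by (simp add: A_def)
  moreover have "real (N - n) * d n \<le> B"
    using sum_mono[of "{n..<N}" "\<lambda>_. d n" d] mono by (simp add: B_def)
  ultimately have "real (N - n) * A \<le> real n * B"
    using mult_left_mono[of A "real n * d n" "real (N - n)"] mult_left_mono[of "real (N - n) * d n" B "real n"]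
    by (simp add: algebra_simps)
  then show ?thesis
    unfolding \<open>(\<Sum>s<N. d s) = A + B\<close> A_def[symmetric] using \<open>n < N\<close> by (simp add: of_nat_diff algebra_simps)
qed simp

text \<open>Among \<open>N\<close> sites, let \<open>t\<close> sites carry a fixed pattern with \<open>j\<close> up spins. Then \<open>hyper t j\<close> is the
  probability of this pattern when the set of up spins is uniform among the \<open>k0\<close>-subsets, and
  \<open>binom_weight t j\<close> its probability under independent spins that are up with probability \<open>p\<close>.
  Given the pattern, \<open>draw_ratio t j\<close> is the conditional probability under the first law that a further
  site is up; \<open>marg_kl t\<close> is the relative entropy of the two laws of \<open>t\<close> sites.\<close>

locale hyper_binomial =
  fixes N k0 :: nat and p :: real
  assumes k0_le_N: "k0 \<le> N" and p_pos: "0 < p" and p_less_1: "p < 1"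
begin

definition hyper :: "nat \<Rightarrow> nat \<Rightarrow> real" where
  "hyper t j = (if j \<le> k0 then real (N - t choose (k0 - j)) else 0) / real (N choose k0)"

definition binom_weight :: "nat \<Rightarrow> nat \<Rightarrow> real" where
  "binom_weight t j = p ^ j * (1 - p) ^ (t - j)"

definition draw_ratio :: "nat \<Rightarrow> nat \<Rightarrow> real" where
  "draw_ratio t j = (real k0 - real j) / (real N - real t)"

definition marg_kl :: "nat \<Rightarrow> real" where
  "marg_kl t = (\<Sum>j\<le>t. real (t choose j) * kl_term (hyper t j) (binom_weight t j))"

definition marg_kl_incr :: "nat \<Rightarrow> real" where
  "marg_kl_incr t = (\<Sum>j\<le>t. real (t choose j) * (hyper t j * binary_kl (draw_ratio t j) p))"

lemma hyper_nonneg: "hyper t j \<ge> 0"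
  by (simp add: hyper_def)

lemma binom_weight_pos: "binom_weight t j > 0"
  using p_pos p_less_1 by (simp add: binom_weight_def)

lemma hyper_pos_imp: assumes "hyper t j > 0" shows "j \<le> k0" "k0 - j \<le> N - t"
  using assms by (auto simp: hyper_def zero_less_divide_iff split: if_splits)

lemma draw_ratio_range: assumes "hyper t j > 0" "t < N" shows "0 \<le> draw_ratio t j" "draw_ratio t j \<le> 1"
  using hyper_pos_imp[OF assms(1)] assms(2) by (auto simp: draw_ratio_def)

lemma hyper_Suc_Suc: assumes "t < N" shows "hyper (Suc t) (Suc j) = hyper t j * draw_ratio t j"
proof (cases "j < k0")
  case True
  define r i where "r = N - Suc t" and "i = k0 - Suc j"
  have "N - t = Suc r" "k0 - j = Suc i" using assms True by (simp_all add: r_def i_def Suc_diff_Suc)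
  then have "hyper t j = real (Suc r choose Suc i) / real (N choose k0)"
    and "draw_ratio t j = real (Suc i) / real (Suc r)"
    using assms True by (simp_all add: hyper_def draw_ratio_def of_nat_diff[symmetric] del: binomial_Suc_Suc)
  moreover have "hyper (Suc t) (Suc j) = real (r choose i) / real (N choose k0)"
    using True by (simp add: hyper_def r_def i_def)
  ultimately show ?thesis
    using binomial_Suc_Suc_eq_ratio[of r i] by (simp del: binomial_Suc_Suc)
qed (auto simp: hyper_def draw_ratio_def)

lemma hyper_Suc: assumes "t < N" shows "hyper (Suc t) j = hyper t j * (1 - draw_ratio t j)"
proof (cases "j \<le> k0")
  case True
  define r where "r = N - Suc t"
  have "N - t = Suc r" using assms by (simp add: r_def Suc_diff_Suc)
  have Nt: "real N - real t = real (Suc r)"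
    using assms of_nat_diff[of t N] \<open>N - t = Suc r\<close> by (metis less_imp_le)
  have kj: "real k0 - real j = real (k0 - j)" using True by (simp add: of_nat_diff)
  have "1 - draw_ratio t j = (real (Suc r) - real (k0 - j)) / real (Suc r)"
    unfolding draw_ratio_def Nt kj by (simp only: diff_divide_distrib) (simp del: of_nat_Suc)
  moreover have "hyper t j = real (Suc r choose (k0 - j)) / real (N choose k0)"
    using True \<open>N - t = Suc r\<close> by (simp add: hyper_def)
  moreover have "hyper (Suc t) j = real (r choose (k0 - j)) / real (N choose k0)"
    using True by (simp add: hyper_def r_def)
  ultimately show ?thesis
    using binomial_Suc_eq_ratio[of r "k0 - j"] by simp
qed (simp add: hyper_def)

lemma binom_weight_Suc_Suc: "binom_weight (Suc t) (Suc j) = binom_weight t j * p"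
  by (simp add: binom_weight_def)

lemma binom_weight_Suc: "j \<le> t \<Longrightarrow> binom_weight (Suc t) j = binom_weight t j * (1 - p)"
  by (simp add: binom_weight_def Suc_diff_le)

lemma marg_kl_Suc: assumes "t < N" shows "marg_kl (Suc t) = marg_kl t + marg_kl_incr t"
proof -
  have "kl_term (hyper (Suc t) j) (binom_weight (Suc t) j)
          + kl_term (hyper (Suc t) (Suc j)) (binom_weight (Suc t) (Suc j))
        = kl_term (hyper t j) (binom_weight t j) + hyper t j * binary_kl (draw_ratio t j) p"
    if "j \<le> t" for j
    using kl_term_chain_rule[of "hyper t j" "binom_weight t j" p "draw_ratio t j"]
      hyper_nonneg binom_weight_pos draw_ratio_range[OF _ assms] p_pos p_less_1
    by (simp add: hyper_Suc[OF assms, of j] hyper_Suc_Suc[OF assms, of j] binom_weight_Suc[OF that]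
        binom_weight_Suc_Suc add.commute)
  then show ?thesis
    unfolding marg_kl_def marg_kl_incr_def sum_choose_Suc
    by (simp add: sum.distrib[symmetric] algebra_simps)
qed

lemma draw_ratio_average:
  assumes "Suc t < N"
  shows "(1 - draw_ratio t j) * draw_ratio (Suc t) j + draw_ratio t j * draw_ratio (Suc t) (Suc j)
    = draw_ratio t j"
proof -
  define a D where "a = real k0 - real j" and "D = real N - real t"
  have "D - 1 \<noteq> 0" "D \<noteq> 0" using assms by (auto simp: D_def)
  have ratios: "draw_ratio t j = a / D" "draw_ratio (Suc t) j = a / (D - 1)"
    "draw_ratio (Suc t) (Suc j) = (a - 1) / (D - 1)"
    by (auto simp: draw_ratio_def a_def D_def algebra_simps)
  have "1 - a / D = (D - a) / D" using \<open>D \<noteq> 0\<close> by (simp add: diff_divide_distrib)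
  then have "(1 - a / D) * (a / (D - 1)) + a / D * ((a - 1) / (D - 1))
      = ((D - a) * a + a * (a - 1)) / (D * (D - 1))"
    by (simp add: add_divide_distrib)
  also have "\<dots> = a * (D - 1) / (D * (D - 1))" by (simp add: algebra_simps)
  finally show ?thesis unfolding ratios using \<open>D - 1 \<noteq> 0\<close> by simp
qed

lemma marg_kl_incr_le_Suc: assumes "Suc t < N" shows "marg_kl_incr t \<le> marg_kl_incr (Suc t)"
proof -
  have "hyper t j * binary_kl (draw_ratio t j) p
      \<le> hyper (Suc t) j * binary_kl (draw_ratio (Suc t) j) p
        + hyper (Suc t) (Suc j) * binary_kl (draw_ratio (Suc t) (Suc j)) p" for j
  proof -
    have next_hyper: "hyper (Suc t) j = hyper t j * (1 - draw_ratio t j)"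
      "hyper (Suc t) (Suc j) = hyper t j * draw_ratio t j"
      using hyper_Suc[of t j] hyper_Suc_Suc[of t j] assms by simp_all
    show ?thesis
    proof (cases "hyper t j = 0")
      case False
      then have "hyper t j > 0" using hyper_nonneg[of t j] by simp
      have "0 \<le> draw_ratio t j" "draw_ratio t j \<le> 1" using draw_ratio_range \<open>hyper t j > 0\<close> assms by auto
      have "binary_kl (draw_ratio t j) p
          \<le> (1 - draw_ratio t j) * binary_kl (draw_ratio (Suc t) j) p
            + draw_ratio t j * binary_kl (draw_ratio (Suc t) (Suc j)) p"
        using binary_kl_convex[of "1 - draw_ratio t j" "draw_ratio (Suc t) j" "draw_ratio (Suc t) (Suc j)" p]
          \<open>0 \<le> draw_ratio t j\<close> \<open>draw_ratio t j \<le> 1\<close> \<open>hyper t j > 0\<close> assms p_pos p_less_1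
          draw_ratio_average[OF assms] draw_ratio_range[of "Suc t"] next_hyper
        by (simp add: zero_less_mult_iff)
      then have "hyper t j * binary_kl (draw_ratio t j) p
          \<le> hyper t j * ((1 - draw_ratio t j) * binary_kl (draw_ratio (Suc t) j) p
            + draw_ratio t j * binary_kl (draw_ratio (Suc t) (Suc j)) p)"
        by (rule mult_left_mono[OF _ hyper_nonneg])
      then show ?thesis by (simp add: next_hyper algebra_simps)
    qed (simp add: next_hyper)
  qed
  then show ?thesis
    unfolding marg_kl_incr_def[of "Suc t"] sum_choose_Suc unfolding marg_kl_incr_def
    by (intro sum_mono mult_left_mono) auto
qed

lemma marg_kl_incr_mono: "t \<le> s \<Longrightarrow> s < N \<Longrightarrow> marg_kl_incr t \<le> marg_kl_incr s"
proof (induction s rule: dec_induct)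
  case (step s)
  then show ?case using marg_kl_incr_le_Suc[of s] by simp
qed simp

lemma marg_kl_eq_sum_incr: "t \<le> N \<Longrightarrow> marg_kl t = (\<Sum>s<t. marg_kl_incr s)"
proof (induction t)
  case 0
  show ?case using k0_le_N by (simp add: marg_kl_def hyper_def binom_weight_def kl_term_def)
next
  case (Suc t)
  then show ?case using marg_kl_Suc[of t] by simp
qed

\<comment> \<open>by the chain rule \<open>marg_kl\<close> has the increments \<open>marg_kl_incr\<close>, which increase, so \<open>marg_kl\<close> is
  convex with \<open>marg_kl 0 = 0\<close>\<close>
lemma marg_kl_le_proportional: "n \<le> N \<Longrightarrow> real N * marg_kl n \<le> real n * marg_kl N"
  using sum_prefix_le_proportional[of N marg_kl_incr n] marg_kl_incr_mono
  by (simp add: marg_kl_eq_sum_incr)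

lemma sum_hyper_eq_1: "t \<le> N \<Longrightarrow> (\<Sum>j\<le>t. real (t choose j) * hyper t j) = 1"
proof (induction t)
  case 0
  show ?case using k0_le_N by (simp add: hyper_def)
next
  case (Suc t)
  then have "hyper (Suc t) j + hyper (Suc t) (Suc j) = hyper t j" for j
    using hyper_Suc[of t j] hyper_Suc_Suc[of t j] by (simp add: algebra_simps)
  then show ?case unfolding sum_choose_Suc using Suc by simp
qed

lemma sum_binom_weight_eq_1: "(\<Sum>j\<le>t. real (t choose j) * binom_weight t j) = 1"
  using binomial_ring[of p "1 - p" t] by (simp add: binom_weight_def algebra_simps)

lemma hyper_marginal:
  assumes "j \<le> n" "n \<le> N"
  shows "(\<Sum>k\<le>N - n. real (N - n choose k) * hyper N (j + k)) = hyper n j"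
proof (cases "j \<le> k0")
  case True
  have "(\<Sum>k\<le>N - n. real (N - n choose k) * hyper N (j + k))
      = (\<Sum>k\<le>N - n. if k = k0 - j then real (N - n choose (k0 - j)) / real (N choose k0) else 0)"
    using True by (intro sum.cong refl) (auto simp: hyper_def)
  also have "\<dots> = hyper n j" using True by (auto simp: hyper_def binomial_eq_0)
  finally show ?thesis .
qed (auto simp: hyper_def intro!: sum.neutral)

lemma binom_weight_marginal:
  assumes "j \<le> n" "n \<le> N"
  shows "(\<Sum>k\<le>N - n. real (N - n choose k) * binom_weight N (j + k)) = binom_weight n j"
proof -
  have "binom_weight N (j + k) = binom_weight n j * (p ^ k * (1 - p) ^ (N - n - k))" if "k \<le> N - n" for k
  proof -
    have "N - (j + k) = (n - j) + (N - n - k)" using that assms by auto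
    then show ?thesis by (simp add: binom_weight_def power_add algebra_simps)
  qed
  then have "(\<Sum>k\<le>N - n. real (N - n choose k) * binom_weight N (j + k))
      = binom_weight n j * (\<Sum>k\<le>N - n. real (N - n choose k) * p ^ k * (1 - p) ^ (N - n - k))"
    by (simp add: sum_distrib_left algebra_simps)
  also have "\<dots> = binom_weight n j"
    using binomial_ring[of p "1 - p" "N - n"] by simp
  finally show ?thesis .
qed

lemma l1_dist_sq_le_marg_kl:
  assumes "n \<le> N"
  shows "(\<Sum>j\<le>n. real (n choose j) * \<bar>hyper n j - binom_weight n j\<bar>)^2 \<le> 2 * marg_kl n"
proof -
  define u v where "u j = real (n choose j) * hyper n j" and "v j = real (n choose j) * binom_weight n j" for j
  have "(\<Sum>j\<le>n. \<bar>u j - v j\<bar>)^2 \<le> 2 * (\<Sum>j\<le>n. kl_term (u j) (v j))"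
    using assms hyper_nonneg binom_weight_pos sum_hyper_eq_1 sum_binom_weight_eq_1
    by (intro pinsker) (auto simp: u_def v_def)
  moreover have "(\<Sum>j\<le>n. kl_term (u j) (v j)) = marg_kl n"
    unfolding marg_kl_def u_def v_def using binom_weight_pos by (intro sum.cong refl) (simp add: kl_term_scale)
  moreover have "(\<Sum>j\<le>n. \<bar>u j - v j\<bar>) = (\<Sum>j\<le>n. real (n choose j) * \<bar>hyper n j - binom_weight n j\<bar>)"
    unfolding u_def v_def by (intro sum.cong refl) (simp add: abs_mult right_diff_distrib[symmetric])
  ultimately show ?thesis by simp
qed

lemma expect_proj_hyper:
  assumes "finite Lam" "card Lam = N" "I \<subseteq> Lam"
    and "\<And>\<phi>. \<phi> \<in> spins Lam \<Longrightarrow> X \<phi> = hyper N (n_up Lam \<phi>)"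
  shows "expect Lam X (g \<circ> proj I) = (\<Sum>\<psi>\<in>spins I. g \<psi> * hyper (card I) (n_up I \<psi>))"
  using expect_proj_n_up[of Lam I X "hyper N" g] hyper_marginal n_up_le_card[of I] card_mono[of Lam I]
    finite_subset[of I Lam] assms
  by simp

lemma expect_proj_binom_weight:
  assumes "finite Lam" "card Lam = N" "I \<subseteq> Lam"
    and "\<And>\<phi>. \<phi> \<in> spins Lam \<Longrightarrow> Y \<phi> = binom_weight N (n_up Lam \<phi>)"
  shows "expect Lam Y (g \<circ> proj I) = (\<Sum>\<psi>\<in>spins I. g \<psi> * binom_weight (card I) (n_up I \<psi>))"
  using expect_proj_n_up[of Lam I Y "binom_weight N" g] binom_weight_marginal n_up_le_card[of I]
    card_mono[of Lam I] finite_subset[of I Lam] assms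
  by simp

lemma rel_entropy_eq_marg_kl:
  assumes "finite Lam" "card Lam = N"
    and "\<And>\<phi>. \<phi> \<in> spins Lam \<Longrightarrow> X \<phi> = hyper N (n_up Lam \<phi>)"
    and "\<And>\<phi>. \<phi> \<in> spins Lam \<Longrightarrow> Y \<phi> = binom_weight N (n_up Lam \<phi>)"
  shows "rel_entropy Lam X Y = marg_kl N"
  using sum_spins_n_up[of Lam "\<lambda>k. kl_term (hyper N k) (binom_weight N k)"] assms
  by (simp add: rel_entropy_eq_sum_kl_term marg_kl_def)

lemma expect_proj_diff_le:
  assumes fin: "finite Lam" and N: "card Lam = N" "0 < N" and "I \<subseteq> Lam"
    and X: "\<And>\<phi>. \<phi> \<in> spins Lam \<Longrightarrow> X \<phi> = hyper N (n_up Lam \<phi>)"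
    and Y: "\<And>\<phi>. \<phi> \<in> spins Lam \<Longrightarrow> Y \<phi> = binom_weight N (n_up Lam \<phi>)"
  shows "\<bar>expect Lam X (f \<circ> proj I) - expect Lam Y (f \<circ> proj I)\<bar>
    \<le> sqrt (2 * real (card I)) * maxabs I f * sqrt (marg_kl N / real N)"
proof -
  define n where "n = card I"
  have "finite I" using finite_subset[OF \<open>I \<subseteq> Lam\<close> fin] .
  have "n \<le> N" unfolding n_def N(1)[symmetric] using fin \<open>I \<subseteq> Lam\<close> by (rule card_mono)
  define l1 where "l1 = (\<Sum>j\<le>n. real (n choose j) * \<bar>hyper n j - binom_weight n j\<bar>)"
  have "l1 \<le> sqrt (2 * real n) * sqrt (marg_kl N / real N)"
  proof -
    have "l1^2 \<le> 2 * marg_kl n"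
      unfolding l1_def by (rule l1_dist_sq_le_marg_kl[OF \<open>n \<le> N\<close>])
    also have "\<dots> \<le> 2 * (real n * marg_kl N / real N)"
      using marg_kl_le_proportional[OF \<open>n \<le> N\<close>] N(2) by (simp add: field_simps)
    finally have "l1^2 \<le> 2 * (real n * marg_kl N / real N)" .
    moreover have "l1 \<ge> 0" unfolding l1_def by (intro sum_nonneg) simp
    ultimately show ?thesis by (simp add: real_le_rsqrt real_sqrt_mult[symmetric])
  qed
  have "\<bar>expect Lam X (f \<circ> proj I) - expect Lam Y (f \<circ> proj I)\<bar>
      = \<bar>\<Sum>\<psi>\<in>spins I. f \<psi> * (hyper n (n_up I \<psi>) - binom_weight n (n_up I \<psi>))\<bar>"
    using expect_proj_hyper[OF fin N(1) \<open>I \<subseteq> Lam\<close> X] expect_proj_binom_weight[OF fin N(1) \<open>I \<subseteq> Lam\<close> Y]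
    by (simp add: n_def sum_subtractf[symmetric] right_diff_distrib)
  also have "\<dots> \<le> maxabs I f * l1"
    unfolding l1_def n_def by (rule abs_sum_spins_diff_le[OF \<open>finite I\<close>])
  also have "\<dots> \<le> maxabs I f * (sqrt (2 * real n) * sqrt (marg_kl N / real N))"
    using \<open>l1 \<le> _\<close> maxabs_nonneg[OF \<open>finite I\<close>] by (rule mult_left_mono)
  finally show ?thesis by (simp add: n_def algebra_simps)
qed

end

section \<open>The binomial law near its mode\<close>

locale interior_count =
  fixes N k0 :: nat
  assumes k0_pos: "0 < k0" and k0_less_N: "k0 < N"
begin

definition p_up :: real where "p_up = real k0 / real N"

lemma p_up_pos: "0 < p_up" and p_up_less_1: "p_up < 1"
  using k0_pos k0_less_N by (auto simp: p_up_def)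

sublocale hyper_binomial N k0 p_up
  using k0_less_N p_up_pos p_up_less_1 by unfold_locales auto

definition binom_pmf :: "nat \<Rightarrow> real" where
  "binom_pmf k = real (N choose k) * binom_weight N k"

lemma binom_pmf_nonneg: "binom_pmf k \<ge> 0"
  using binom_weight_pos by (simp add: binom_pmf_def less_imp_le)

lemma binom_pmf_mode_pos: "binom_pmf k0 > 0"
  using binom_weight_pos k0_less_N by (simp add: binom_pmf_def)

lemma hyper_N: "hyper N j = (if j = k0 then 1 / real (N choose k0) else 0)"
  by (simp add: hyper_def)

lemma marg_kl_N: "marg_kl N = - ln (binom_pmf k0)"
proof -
  have "real (N choose j) * kl_term (hyper N j) (binom_weight N j)
      = (if j = k0 then real (N choose k0) * kl_term (1 / real (N choose k0)) (binom_weight N k0) else 0)" for j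
    by (simp add: hyper_N kl_term_def)
  then have "marg_kl N = real (N choose k0) * kl_term (1 / real (N choose k0)) (binom_weight N k0)"
    unfolding marg_kl_def using k0_less_N by simp
  also have "\<dots> = ln (1 / binom_pmf k0)"
    using k0_less_N by (simp add: kl_term_def binom_pmf_def)
  finally show ?thesis using binom_pmf_mode_pos by (simp add: ln_div)
qed

lemma binom_pmf_Suc:
  assumes "k < N"
  shows "binom_pmf (Suc k) * (real (Suc k) * (1 - p_up)) = binom_pmf k * (real (N - k) * p_up)"
proof -
  have "(N choose Suc k) * Suc k = N * ((N - 1) choose k)"
    using times_binomial_minus1_eq[of "Suc k" N] by (simp add: mult.commute)
  also have "\<dots> = (N choose k) * (N - k)"
    using binomial_absorb_comp[of N k] by (simp add: mult.commute)
  finally have binomial: "real (N choose Suc k) * real (Suc k) = real (N choose k) * real (N - k)"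
    by (metis of_nat_mult)
  define c where "c = p_up * (1 - p_up) * (p_up ^ k * (1 - p_up) ^ (N - Suc k))"
  have "N - k = Suc (N - Suc k)" using assms by simp
  then have "binom_pmf (Suc k) * (real (Suc k) * (1 - p_up)) = real (N choose Suc k) * real (Suc k) * c"
    and "binom_pmf k * (real (N - k) * p_up) = real (N choose k) * real (N - k) * c"
    unfolding binom_pmf_def binom_weight_def c_def by (simp_all only: diff_Suc_Suc power_Suc mult_ac)
  then show ?thesis by (simp only: binomial)
qed

lemma binom_pmf_Suc_margin:
  "k \<le> N \<Longrightarrow> real (N - k) * p_up - real (Suc k) * (1 - p_up) = real k0 - real k - 1 + p_up"
  using k0_less_N by (simp add: p_up_def of_nat_diff field_simps)

lemma binom_pmf_le_Suc:
  assumes "k < k0"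
  shows "binom_pmf k \<le> binom_pmf (Suc k)"
proof -
  have "real (Suc k) * (1 - p_up) \<le> real (N - k) * p_up"
    using binom_pmf_Suc_margin[of k] assms k0_less_N p_up_pos by simp
  then have "binom_pmf k * (real (Suc k) * (1 - p_up)) \<le> binom_pmf (Suc k) * (real (Suc k) * (1 - p_up))"
    using binom_pmf_Suc[of k] assms k0_less_N by (simp add: mult_left_mono binom_pmf_nonneg)
  then show ?thesis using p_up_less_1 by (simp add: mult_le_cancel_right)
qed

lemma binom_pmf_Suc_le:
  assumes "k0 \<le> k" "k < N"
  shows "binom_pmf (Suc k) \<le> binom_pmf k"
proof -
  have "real (N - k) * p_up \<le> real (Suc k) * (1 - p_up)"
    using binom_pmf_Suc_margin[of k] assms p_up_less_1 by simp
  then have "binom_pmf (Suc k) * (real (Suc k) * (1 - p_up)) \<le> binom_pmf k * (real (Suc k) * (1 - p_up))"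
    using binom_pmf_Suc[of k] assms by (simp add: mult_left_mono binom_pmf_nonneg)
  then show ?thesis using p_up_less_1 by (simp add: mult_le_cancel_right)
qed

lemma binom_pmf_le_mode:
  assumes "k \<le> N"
  shows "binom_pmf k \<le> binom_pmf k0"
proof (cases "k \<le> k0")
  case True
  then show ?thesis
  proof (induction rule: inc_induct)
    case (step n)
    then show ?case using binom_pmf_le_Suc[of n] by linarith
  qed simp
next
  case False
  then have "k0 \<le> k" by simp
  then show ?thesis using assms
  proof (induction rule: dec_induct)
    case (step n)
    then show ?case using binom_pmf_Suc_le[of n] by linarith
  qed simp
qed

lemma sum_binom_pmf: "(\<Sum>k\<le>N. binom_pmf k) = 1"
  using sum_binom_weight_eq_1[of N] by (simp add: binom_pmf_def)

lemma marg_kl_N_le_ln: "marg_kl N \<le> ln (real N + 1)"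
proof -
  have "1 \<le> (\<Sum>k\<le>N. binom_pmf k0)"
    using sum_binom_pmf sum_mono[of "{..N}" binom_pmf "\<lambda>_. binom_pmf k0"] binom_pmf_le_mode by simp
  then have "1 / (real N + 1) \<le> binom_pmf k0" by (simp add: field_simps)
  then have "ln (1 / (real N + 1)) \<le> ln (binom_pmf k0)" by (intro ln_mono) auto
  then show ?thesis unfolding marg_kl_N by (simp add: ln_div)
qed

definition var :: real where "var = real N * p_up * (1 - p_up)"

lemma var_pos: "var > 0"
  using k0_less_N p_up_pos p_up_less_1 by (simp add: var_def)

lemma binom_pmf_Suc_ge:
  assumes "i < L" "k0 + L \<le> N"
  shows "(1 - real L / var) * binom_pmf (k0 + i) \<le> binom_pmf (Suc (k0 + i))"
proof -
  define a b where "a = real (Suc (k0 + i)) * (1 - p_up)" and "b = real (N - (k0 + i)) * p_up"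
  have "a > 0" using p_up_less_1 by (simp add: a_def)
  have "a - b = real i + 1 - p_up"
    using binom_pmf_Suc_margin[of "k0 + i"] assms by (simp add: a_def b_def)
  also have "\<dots> \<le> real L" using assms p_up_pos by simp
  also have "\<dots> \<le> real L * (real (Suc (k0 + i)) / real k0)"
    using k0_pos by (simp add: le_divide_eq mult_left_mono)
  also have "\<dots> = real L / var * a"
    using k0_pos k0_less_N p_up_less_1 by (simp add: a_def var_def p_up_def field_simps)
  finally have "(1 - real L / var) * a \<le> b" by (simp add: algebra_simps)
  then have "binom_pmf (k0 + i) * ((1 - real L / var) * a) \<le> binom_pmf (k0 + i) * b"
    by (rule mult_left_mono[OF _ binom_pmf_nonneg])
  also have "\<dots> = binom_pmf (Suc (k0 + i)) * a"
    using binom_pmf_Suc[of "k0 + i"] assms by (simp add: a_def b_def)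
  finally show ?thesis using \<open>a > 0\<close> by (simp add: mult_ac)
qed

lemma sq_le_half_var_imp_le_var: "real L ^ 2 \<le> var / 2 \<Longrightarrow> real L \<le> var"
proof -
  assume "real L ^ 2 \<le> var / 2"
  moreover have "real L \<le> real L ^ 2" by (cases L) (auto simp: power2_eq_square)
  ultimately show ?thesis using var_pos by linarith
qed

lemma le_var_imp_le_N: "real L \<le> var \<Longrightarrow> k0 + L \<le> N"
proof -
  assume "real L \<le> var"
  also have "var = real (N - k0) * (real k0 / real N)"
    using k0_less_N by (simp add: var_def p_up_def of_nat_diff field_simps)
  also have "\<dots> \<le> real (N - k0)"
    using k0_less_N by (intro mult_left_le) auto
  finally show ?thesis using k0_less_N by simp
qed

\<comment> \<open>within \<open>L \<approx> sqrt var\<close> of the mode, the ratios of consecutive terms multiply to at least \<open>1/2\<close>\<close>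
lemma binom_pmf_window_ge:
  assumes L: "real L ^ 2 \<le> var / 2" and "i \<le> L"
  shows "binom_pmf k0 / 2 \<le> binom_pmf (k0 + i)"
proof -
  define c where "c = 1 - real L / var"
  have "real L \<le> var" using L by (rule sq_le_half_var_imp_le_var)
  then have "0 \<le> c" "c \<le> 1" "k0 + L \<le> N" using var_pos le_var_imp_le_N by (auto simp: c_def field_simps)
  have geometric: "c ^ i * binom_pmf k0 \<le> binom_pmf (k0 + i)" if "i \<le> L" for i
    using that
  proof (induction i)
    case (Suc i)
    then have "c * (c ^ i * binom_pmf k0) \<le> c * binom_pmf (k0 + i)"
      using \<open>0 \<le> c\<close> by (intro mult_left_mono) auto
    also have "\<dots> \<le> binom_pmf (Suc (k0 + i))"
      unfolding c_def using Suc \<open>k0 + L \<le> N\<close> by (intro binom_pmf_Suc_ge) auto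
    finally show ?case by simp
  qed simp
  have "1 / 2 \<le> 1 + real L * (- (real L / var))"
    using L var_pos by (simp add: power2_eq_square field_simps)
  also have "\<dots> \<le> c ^ L"
    unfolding c_def using Bernoulli_inequality[of "- (real L / var)" L] \<open>real L \<le> var\<close> var_pos by simp
  also have "\<dots> \<le> c ^ i" using \<open>i \<le> L\<close> \<open>0 \<le> c\<close> \<open>c \<le> 1\<close> by (rule power_decreasing)
  finally have "1 / 2 * binom_pmf k0 \<le> c ^ i * binom_pmf k0"
    using binom_pmf_nonneg by (intro mult_right_mono) auto
  then show ?thesis using geometric[OF \<open>i \<le> L\<close>] by simp
qed

lemma binom_pmf_mode_window:
  assumes L: "real L ^ 2 \<le> var / 2"
  shows "real (Suc L) * binom_pmf k0 \<le> 2"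
proof -
  have "k0 + L \<le> N" using L by (intro le_var_imp_le_N sq_le_half_var_imp_le_var)
  have "real (Suc L) * (binom_pmf k0 / 2) \<le> (\<Sum>i\<le>L. binom_pmf (k0 + i))"
    using sum_mono[of "{..L}" "\<lambda>_. binom_pmf k0 / 2" "\<lambda>i. binom_pmf (k0 + i)"] binom_pmf_window_ge[OF L] by simp
  also have "\<dots> = (\<Sum>k\<in>(\<lambda>i. k0 + i) ` {..L}. binom_pmf k)"
    by (subst sum.reindex) (auto simp: inj_on_def)
  also have "\<dots> \<le> (\<Sum>k\<le>N. binom_pmf k)"
    using \<open>k0 + L \<le> N\<close> by (intro sum_mono2) (auto simp: binom_pmf_nonneg)
  finally show ?thesis using sum_binom_pmf by simp
qed

lemma binom_pmf_mode_sq_le: "binom_pmf k0 ^ 2 * var \<le> 8"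
proof -
  define L where "L = nat \<lfloor>sqrt (var / 2)\<rfloor>"
  have "real L \<le> sqrt (var / 2)" "sqrt (var / 2) < real L + 1"
    using var_pos by (simp_all add: L_def)
  then have "real L ^ 2 \<le> sqrt (var / 2) ^ 2" "sqrt (var / 2) ^ 2 \<le> (real L + 1) ^ 2"
    using power_mono[of "real L" "sqrt (var / 2)" 2] power_mono[of "sqrt (var / 2)" "real L + 1" 2] var_pos
    by (simp_all del: real_sqrt_pow2)
  then have "real L ^ 2 \<le> var / 2" "var / 2 \<le> (real L + 1) ^ 2"
    using var_pos by simp_all
  have "binom_pmf k0 ^ 2 * var \<le> 2 * (binom_pmf k0 ^ 2 * (real L + 1) ^ 2)"
    using mult_left_mono[OF \<open>var / 2 \<le> (real L + 1) ^ 2\<close>, of "binom_pmf k0 ^ 2"] by simp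
  also have "\<dots> = 2 * (real (Suc L) * binom_pmf k0) ^ 2"
    by (simp add: power_mult_distrib)
  also have "\<dots> \<le> 2 * 2 ^ 2"
    using binom_pmf_mode_window[OF \<open>real L ^ 2 \<le> var / 2\<close>] binom_pmf_nonneg
    by (intro mult_left_mono power_mono) auto
  finally show ?thesis by simp
qed

lemma ln_le_four_marg_kl:
  assumes "128 \<le> real N * (p_up * (1 - p_up)) ^ 2"
  shows "ln (real N + 1) \<le> 4 * marg_kl N"
proof -
  have "real N + 1 \<le> 2 * real N" using k0_less_N by simp
  also have "\<dots> \<le> real N * (real N * (p_up * (1 - p_up)) ^ 2) / 64"
    using mult_left_mono[OF assms, of "real N"] by simp
  also have "\<dots> = (var / 8) ^ 2" by (simp add: var_def power2_eq_square)
  also have "\<dots> \<le> (1 / binom_pmf k0 ^ 2) ^ 2"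
    using binom_pmf_mode_sq_le binom_pmf_mode_pos var_pos by (intro power_mono) (simp_all add: field_simps)
  finally have "ln (real N + 1) \<le> ln ((1 / binom_pmf k0 ^ 2) ^ 2)" by (intro ln_mono) auto
  then show ?thesis
    using binom_pmf_mode_pos by (simp add: marg_kl_N ln_div ln_realpow)
qed

end

section \<open>Microcanonical versus canonical ensemble\<close>

context interior_count
begin

lemma mu_MC_eq_hyper:
  assumes fin: "finite Lam" and N: "card Lam = N" and "\<phi> \<in> spins Lam"
  shows "mu_MC Lam (2 * p_up - 1) \<phi> = hyper N (n_up Lam \<phi>)"
proof -
  have "magN Lam \<psi> = 2 * p_up - 1 \<longleftrightarrow> n_up Lam \<psi> = k0" if "\<psi> \<in> spins Lam" for \<psi>
    using magn_eq_n_up[OF fin that] N k0_less_N by (auto simp: magN_def p_up_def field_simps)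
  then have mc: "mc_set Lam (2 * p_up - 1) = {\<psi>\<in>spins Lam. n_up Lam \<psi> = k0}"
    unfolding mc_set_def by auto
  have "real (card (mc_set Lam (2 * p_up - 1))) = (\<Sum>\<psi>\<in>spins Lam. if n_up Lam \<psi> = k0 then 1 else 0)"
    unfolding mc using fin by (simp add: sum.inter_filter[symmetric] finite_spins)
  also have "\<dots> = real (N choose k0)"
    using sum_spins_n_up[OF fin, of "\<lambda>k. if k = k0 then 1 else 0"] N k0_less_N
    by (simp add: if_distrib[of "\<lambda>x. _ * x"] cong: if_cong)
  finally show ?thesis
    unfolding mu_MC_def hyper_N mc using assms by auto
qed

lemma mu_C_eq_binom_weight:
  assumes fin: "finite Lam" and N: "card Lam = N" and "\<phi> \<in> spins Lam"
  shows "mu_C Lam (artanh (- (2 * p_up - 1))) \<phi> = binom_weight N (n_up Lam \<phi>)"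
proof -
  define \<mu> w where "\<mu> = artanh (- (2 * p_up - 1))" and "w = p_up / (1 - p_up)"
  have "w > 0" using p_up_pos p_up_less_1 by (simp add: w_def)
  \<comment> \<open>\<open>artanh\<close> is chosen so that \<open>exp (-2 \<mu>) = p / (1 - p)\<close>\<close>
  have "exp (- 2 * \<mu>) = w"
  proof -
    have "(1 + - (2 * p_up - 1)) / (1 - - (2 * p_up - 1)) = (1 - p_up) / p_up"
      using p_up_pos by (simp add: field_simps)
    then have "- 2 * \<mu> = ln w"
      using p_up_pos p_up_less_1 by (simp add: \<mu>_def artanh_def w_def ln_div)
    then show ?thesis using \<open>w > 0\<close> by simp
  qed
  have weight: "exp (- \<mu> * magn Lam \<psi>) = w ^ n_up Lam \<psi> * exp \<mu> ^ N" if "\<psi> \<in> spins Lam" for \<psi>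
  proof -
    have "- \<mu> * magn Lam \<psi> = real (n_up Lam \<psi>) * (- 2 * \<mu>) + real N * \<mu>"
      unfolding magn_eq_n_up[OF fin that] N by (simp add: algebra_simps)
    then have "exp (- \<mu> * magn Lam \<psi>) = exp (real (n_up Lam \<psi>) * (- 2 * \<mu>)) * exp (real N * \<mu>)"
      by (simp only: exp_add)
    also have "\<dots> = exp (- 2 * \<mu>) ^ n_up Lam \<psi> * exp \<mu> ^ N" by (simp only: exp_of_nat_mult)
    finally show ?thesis by (simp only: \<open>exp (- 2 * \<mu>) = w\<close>)
  qed
  have "Zc Lam \<mu> = exp \<mu> ^ N * (\<Sum>k\<le>N. real (N choose k) * w ^ k * 1 ^ (N - k))"
    unfolding Zc_def using weight sum_spins_n_up[OF fin, of "\<lambda>k. w ^ k * exp \<mu> ^ N"] N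
    by (simp add: sum_distrib_left algebra_simps)
  also have "\<dots> = exp \<mu> ^ N * (w + 1) ^ N" by (simp add: binomial_ring)
  finally have "mu_C Lam \<mu> \<phi> = w ^ n_up Lam \<phi> / (w + 1) ^ N"
    unfolding mu_C_def weight[OF assms(3)] by simp
  also have "\<dots> = binom_weight N (n_up Lam \<phi>)"
    using n_up_le_card[OF fin, of \<phi>] N p_up_less_1
    by (simp add: binom_weight_def w_def power_divide power_diff field_simps)
  finally show ?thesis by (simp add: \<mu>_def)
qed

lemma rel_entropy_MC_C:
  assumes "finite Lam" "card Lam = N"
  shows "rel_entropy Lam (mu_MC Lam (2 * p_up - 1)) (mu_C Lam (artanh (- (2 * p_up - 1)))) = marg_kl N"
  using assms by (intro rel_entropy_eq_marg_kl mu_MC_eq_hyper mu_C_eq_binom_weight)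

lemma expect_proj_MC_C_diff_le:
  assumes "finite Lam" "card Lam = N" "I \<subseteq> Lam"
  shows "\<bar>expect Lam (mu_MC Lam (2 * p_up - 1)) (f \<circ> proj I)
      - expect Lam (mu_C Lam (artanh (- (2 * p_up - 1)))) (f \<circ> proj I)\<bar>
    \<le> sqrt (2 * real (card I)) * maxabs I f * sqrt (marg_kl N / real N)"
  using assms k0_less_N by (intro expect_proj_diff_le mu_MC_eq_hyper mu_C_eq_binom_weight) auto

end

lemma RanM_interior_count:
  assumes fin: "finite Lam" and "Lam \<noteq> {}" "m \<in> RanM Lam" "m \<noteq> 1" "m \<noteq> -1"
  obtains k0 where "interior_count (card Lam) k0" "m = 2 * interior_count.p_up (card Lam) k0 - 1"
proof -
  obtain \<phi> where "\<phi> \<in> spins Lam" "magN Lam \<phi> = m" using assms by (auto simp: RanM_def)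
  define N k0 where "N = card Lam" and "k0 = n_up Lam \<phi>"
  have "real N > 0" using fin \<open>Lam \<noteq> {}\<close> by (simp add: N_def card_gt_0_iff)
  have "k0 \<le> N" unfolding k0_def N_def using fin by (rule n_up_le_card)
  have m: "m = 2 * (real k0 / real N) - 1"
    using magn_eq_n_up[OF fin \<open>\<phi> \<in> spins Lam\<close>] \<open>magN Lam \<phi> = m\<close> \<open>real N > 0\<close>
    by (simp add: magN_def k0_def N_def field_simps)
  then have "k0 \<noteq> 0" "k0 \<noteq> N" using assms \<open>real N > 0\<close> by auto
  then have "interior_count N k0" using \<open>k0 \<le> N\<close> by unfold_locales auto
  then show ?thesis using that m by (simp add: N_def interior_count.p_up_def)
qed

lemma expect_proj_MC_C_diff_le_rel_entropy:
  assumes "m \<noteq> 1" "m \<noteq> -1" "finite Lam" "Lam \<noteq> {}" "I \<subseteq> Lam" "m \<in> RanM Lam"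
  shows "\<bar>expect Lam (mu_MC Lam m) (f \<circ> proj I) - expect Lam (mu_C Lam (artanh (- m))) (f \<circ> proj I)\<bar>
    \<le> sqrt (2 * real (card I)) * maxabs I f * sqrt (rel_entropy Lam (mu_MC Lam m) (mu_C Lam (artanh (- m))) / real (card Lam))"
proof -
  obtain k0 where k0: "interior_count (card Lam) k0" and m: "m = 2 * interior_count.p_up (card Lam) k0 - 1"
    using RanM_interior_count assms by metis
  interpret interior_count "card Lam" k0 by (rule k0)
  show ?thesis
    unfolding m rel_entropy_MC_C[OF \<open>finite Lam\<close> refl] using assms by (intro expect_proj_MC_C_diff_le) auto
qed

lemma rel_entropy_MC_C_le_ln:
  assumes "m \<noteq> 1" "m \<noteq> -1" "finite Lam" "Lam \<noteq> {}" "m \<in> RanM Lam"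
  shows "rel_entropy Lam (mu_MC Lam m) (mu_C Lam (artanh (- m))) \<le> ln (real (card Lam) + 1)"
proof -
  obtain k0 where k0: "interior_count (card Lam) k0" and m: "m = 2 * interior_count.p_up (card Lam) k0 - 1"
    using RanM_interior_count assms by metis
  interpret interior_count "card Lam" k0 by (rule k0)
  show ?thesis unfolding m rel_entropy_MC_C[OF \<open>finite Lam\<close> refl] by (rule marg_kl_N_le_ln)
qed

lemma ln_Suc_le_two_ln: assumes "2 \<le> n" shows "ln (real n + 1) \<le> 2 * ln (real n)"
proof -
  have "2 \<le> real n" "real n * 2 \<le> real n * real n" using assms by (auto intro: mult_left_mono)
  then have "real n + 1 \<le> real n ^ 2" unfolding power2_eq_square by linarith
  then have "ln (real n + 1) \<le> ln (real n ^ 2)" using assms by (simp add: ln_mono)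
  then show ?thesis using assms by (simp add: ln_realpow)
qed

lemma expect_proj_MC_C_diff_bigO:
  assumes "m \<noteq> 1" "m \<noteq> -1" "finite I"
  shows "\<exists>C N0. \<forall>Lam :: 'a set. finite Lam \<and> I \<subseteq> Lam \<and> card Lam \<ge> N0 \<and> m \<in> RanM Lam \<longrightarrow>
    \<bar>expect Lam (mu_MC Lam m) (f \<circ> proj I) - expect Lam (mu_C Lam (artanh (- m))) (f \<circ> proj I)\<bar>
      \<le> C * sqrt (ln (real (card Lam))) / sqrt (real (card Lam))"
proof -
  define K where "K = sqrt (2 * real (card I)) * maxabs I f"
  have "K \<ge> 0" using maxabs_nonneg[OF \<open>finite I\<close>] by (simp add: K_def)
  have "\<bar>expect Lam (mu_MC Lam m) (f \<circ> proj I) - expect Lam (mu_C Lam (artanh (- m))) (f \<circ> proj I)\<bar>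
      \<le> K * sqrt 2 * sqrt (ln (real (card Lam))) / sqrt (real (card Lam))"
    if Lam: "finite Lam" "I \<subseteq> Lam" "2 \<le> card Lam" "m \<in> RanM Lam" for Lam :: "'a set"
  proof -
    define N where "N = card Lam"
    have "Lam \<noteq> {}" using Lam by auto
    have "rel_entropy Lam (mu_MC Lam m) (mu_C Lam (artanh (- m))) / real N \<le> 2 * ln (real N) / real N"
      using rel_entropy_MC_C_le_ln[OF assms(1,2) Lam(1) \<open>Lam \<noteq> {}\<close> Lam(4)] ln_Suc_le_two_ln[of N] Lam(3)
      by (intro divide_right_mono) (auto simp: N_def)
    then have "sqrt (rel_entropy Lam (mu_MC Lam m) (mu_C Lam (artanh (- m))) / real N)
        \<le> sqrt (2 * ln (real N) / real N)"
      by (rule real_sqrt_le_mono)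
    also have "\<dots> = sqrt 2 * sqrt (ln (real N)) / sqrt (real N)"
      by (simp add: real_sqrt_mult real_sqrt_divide)
    finally have "K * sqrt (rel_entropy Lam (mu_MC Lam m) (mu_C Lam (artanh (- m))) / real N)
        \<le> K * (sqrt 2 * sqrt (ln (real N)) / sqrt (real N))"
      using \<open>K \<ge> 0\<close> by (rule mult_left_mono)
    then show ?thesis
      using expect_proj_MC_C_diff_le_rel_entropy[OF assms(1,2) Lam(1) \<open>Lam \<noteq> {}\<close> Lam(2,4), of f]
      by (simp add: K_def N_def)
  qed
  then show ?thesis by blast
qed

lemma rel_entropy_MC_C_eventually_ge:
  assumes "m \<noteq> 1" "m \<noteq> -1"
  shows "\<exists>N0. \<forall>Lam :: 'a set. finite Lam \<and> card Lam \<ge> N0 \<and> m \<in> RanM Lam \<longrightarrow>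
    ln (real (card Lam) + 1) / (4 * real (card Lam))
      \<le> rel_entropy Lam (mu_MC Lam m) (mu_C Lam (artanh (- m))) / real (card Lam)"
proof -
  define c where "c = ((1 + m) / 2 * (1 - (1 + m) / 2)) ^ 2"
  have "ln (real (card Lam) + 1) / (4 * real (card Lam))
      \<le> rel_entropy Lam (mu_MC Lam m) (mu_C Lam (artanh (- m))) / real (card Lam)"
    if Lam: "finite Lam" "nat \<lceil>128 / c\<rceil> + 1 \<le> card Lam" "m \<in> RanM Lam" for Lam :: "'a set"
  proof -
    have "Lam \<noteq> {}" using Lam by auto
    obtain k0 where k0: "interior_count (card Lam) k0" and m: "m = 2 * interior_count.p_up (card Lam) k0 - 1"
      using RanM_interior_count[OF Lam(1) \<open>Lam \<noteq> {}\<close> Lam(3) assms] by metis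
    interpret interior_count "card Lam" k0 by (rule k0)
    have c: "c = (p_up * (1 - p_up)) ^ 2" by (simp add: c_def m)
    then have "c > 0" using p_up_pos p_up_less_1 by simp
    have "128 / c \<le> real (card Lam)" using Lam(2) by linarith
    then have "128 \<le> real (card Lam) * (p_up * (1 - p_up)) ^ 2"
      using \<open>c > 0\<close> c by (simp add: field_simps)
    then have "ln (real (card Lam) + 1) \<le> 4 * marg_kl (card Lam)" by (rule ln_le_four_marg_kl)
    then show ?thesis
      unfolding m rel_entropy_MC_C[OF Lam(1) refl] using k0_less_N by (simp add: field_simps)
  qed
  then show ?thesis by blast
qed

theorem corollary3p9:
  fixes m :: real
  assumes "m \<noteq> 1" and "m \<noteq> -1"
  defines "\<mu> \<equiv> artanh (- m)"
  shows
    "(\<forall>(Lam :: 'a set) I (f :: ('a \<Rightarrow> real) \<Rightarrow> real).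
        finite Lam \<and> Lam \<noteq> {} \<and> I \<subseteq> Lam \<and> m \<in> RanM Lam \<longrightarrow>
          \<bar>expect Lam (mu_MC Lam m) (f \<circ> proj I) - expect Lam (mu_C Lam \<mu>) (f \<circ> proj I)\<bar>
            \<le> sqrt (2 * real (card I)) * maxabs I f
               * sqrt (rel_entropy Lam (mu_MC Lam m) (mu_C Lam \<mu>) / real (card Lam))
          \<and> sqrt (2 * real (card I)) * maxabs I f
               * sqrt (rel_entropy Lam (mu_MC Lam m) (mu_C Lam \<mu>) / real (card Lam))
            \<le> sqrt (2 * real (card I)) * maxabs I f
               * sqrt (ln (real (card Lam) + 1) / real (card Lam)))
     \<and> (\<forall>(I :: 'a set) (f :: ('a \<Rightarrow> real) \<Rightarrow> real). finite I \<longrightarrow>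
          (\<exists>C N0. \<forall>Lam :: 'a set.
             finite Lam \<and> I \<subseteq> Lam \<and> card Lam \<ge> N0 \<and> m \<in> RanM Lam \<longrightarrow>
               \<bar>expect Lam (mu_MC Lam m) (f \<circ> proj I) - expect Lam (mu_C Lam \<mu>) (f \<circ> proj I)\<bar>
                 \<le> C * sqrt (ln (real (card Lam))) / sqrt (real (card Lam))))
     \<and> (\<exists>N0 :: nat. \<forall>Lam :: 'a set.
          finite Lam \<and> card Lam \<ge> N0 \<and> m \<in> RanM Lam \<longrightarrow>
            ln (real (card Lam) + 1) / (4 * real (card Lam))
              \<le> rel_entropy Lam (mu_MC Lam m) (mu_C Lam \<mu>) / real (card Lam))"
proof -
  have entropy_le_ln:
    "sqrt (2 * real (card I)) * maxabs I f * sqrt (rel_entropy Lam (mu_MC Lam m) (mu_C Lam \<mu>) / real (card Lam))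
      \<le> sqrt (2 * real (card I)) * maxabs I f * sqrt (ln (real (card Lam) + 1) / real (card Lam))"
    if "finite Lam" "Lam \<noteq> {}" "I \<subseteq> Lam" "m \<in> RanM Lam" for Lam I :: "'a set" and f :: "('a \<Rightarrow> real) \<Rightarrow> real"
    using rel_entropy_MC_C_le_ln[OF assms(1,2) that(1,2,4)] maxabs_nonneg[OF finite_subset[OF that(3,1)], of f]
    unfolding \<mu>_def by (intro mult_left_mono real_sqrt_le_mono divide_right_mono) auto
  show ?thesis
    unfolding \<mu>_def
    using expect_proj_MC_C_diff_le_rel_entropy[OF assms(1,2)] entropy_le_ln[unfolded \<mu>_def]
      expect_proj_MC_C_diff_bigO[OF assms(1,2)] rel_entropy_MC_C_eventually_ge[OF assms(1,2)]
    by (intro conjI allI impI; (elim conjE)?; simp)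
qed

end
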